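(* Let $\mathbf P=(P,\leq,{}',0,1)$ be a finite orthomodular poset which is not a lattice. Then its Dedekind-MacNeille completion $\mathrm{DM}(\mathbf P)$ is not orthomodular.
   Context: For $M\subseteq P$, $U(M)$, $L(M)$ are the sets of upper and lower bounds. A poset with complementation is a bounded poset with antitone involution $'$ ($x\le y\Rightarrow y'\le x'$, $x''=x$) with $L(\{x,x'\})=\{0\}$, $U(\{x,x'\})=\{1\}$. It is an orthomodular poset if for all $x\le y'$ the join $x\vee y$ exists and $((x\vee y)\wedge y')\vee y= x\vee y$ whenever defined (with $x\wedge y=(x'\vee y')'$). The Dedekind-MacNeille completion $\mathrm{DM}(\mathbf P)$ is the complete lattice of subsets $B\subseteq P$ with $L(U(B))=B$ under inclusion, with antitone involution $X'=L(\{u'\mid u\in X\})$; a lattice with complementation is orthomodular if $x\vee y=((x\vee y)\wedge y')\vee y$ for all $x,y$. *)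

theory Defs
  imports Main
begin

definition lowerB :: "'a set \<Rightarrow> ('a \<Rightarrow> 'a \<Rightarrow> bool) \<Rightarrow> 'a set \<Rightarrow> 'a set" where
  "lowerB P le M = {x \<in> P. \<forall>m\<in>M. le x m}"

definition upperB :: "'a set \<Rightarrow> ('a \<Rightarrow> 'a \<Rightarrow> bool) \<Rightarrow> 'a set \<Rightarrow> 'a set" where
  "upperB P le M = {x \<in> P. \<forall>m\<in>M. le m x}"

definition is_lub :: "'a set \<Rightarrow> ('a \<Rightarrow> 'a \<Rightarrow> bool) \<Rightarrow> 'a set \<Rightarrow> 'a \<Rightarrow> bool" where
  "is_lub P le M j \<longleftrightarrow> j \<in> upperB P le M \<and> (\<forall>u\<in>upperB P le M. le j u)"

definition is_glb :: "'a set \<Rightarrow> ('a \<Rightarrow> 'a \<Rightarrow> bool) \<Rightarrow> 'a set \<Rightarrow> 'a \<Rightarrow> bool" where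
  "is_glb P le M m \<longleftrightarrow> m \<in> lowerB P le M \<and> (\<forall>l\<in>lowerB P le M. le l m)"

definition lub :: "'a set \<Rightarrow> ('a \<Rightarrow> 'a \<Rightarrow> bool) \<Rightarrow> 'a set \<Rightarrow> 'a" where
  "lub P le M = (THE j. is_lub P le M j)"

definition glb :: "'a set \<Rightarrow> ('a \<Rightarrow> 'a \<Rightarrow> bool) \<Rightarrow> 'a set \<Rightarrow> 'a" where
  "glb P le M = (THE m. is_glb P le M m)"

definition partial_order_on' :: "'a set \<Rightarrow> ('a \<Rightarrow> 'a \<Rightarrow> bool) \<Rightarrow> bool" where
  "partial_order_on' P le \<longleftrightarrow>
     (\<forall>x\<in>P. le x x) \<and>
     (\<forall>x\<in>P. \<forall>y\<in>P. le x y \<and> le y x \<longrightarrow> x = y) \<and>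
     (\<forall>x\<in>P. \<forall>y\<in>P. \<forall>z\<in>P. le x y \<and> le y z \<longrightarrow> le x z)"

definition poset_with_complementation ::
  "'a set \<Rightarrow> ('a \<Rightarrow> 'a \<Rightarrow> bool) \<Rightarrow> ('a \<Rightarrow> 'a) \<Rightarrow> 'a \<Rightarrow> 'a \<Rightarrow> bool" where
  "poset_with_complementation P le c zero one \<longleftrightarrow>
     partial_order_on' P le \<and> zero \<in> P \<and> one \<in> P \<and>
     (\<forall>x\<in>P. le zero x \<and> le x one) \<and>
     (\<forall>x\<in>P. c x \<in> P) \<and>
     (\<forall>x\<in>P. \<forall>y\<in>P. le x y \<longrightarrow> le (c y) (c x)) \<and>
     (\<forall>x\<in>P. c (c x) = x) \<and>
     (\<forall>x\<in>P. lowerB P le {x, c x} = {zero} \<and> upperB P le {x, c x} = {one})"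

text \<open>Orthomodular poset: for x \<le> y' the join x \<or> y exists, and
  ((x \<or> y) \<and> y') \<or> y = x \<or> y whenever defined, where a \<and> b = (a' \<or> b')'.\<close>
definition orthomodular_poset ::
  "'a set \<Rightarrow> ('a \<Rightarrow> 'a \<Rightarrow> bool) \<Rightarrow> ('a \<Rightarrow> 'a) \<Rightarrow> 'a \<Rightarrow> 'a \<Rightarrow> bool" where
  "orthomodular_poset P le c zero one \<longleftrightarrow>
     poset_with_complementation P le c zero one \<and>
     (\<forall>x\<in>P. \<forall>y\<in>P. le x (c y) \<longrightarrow>
        (\<exists>j. is_lub P le {x, y} j) \<and>
        (\<forall>j m k. is_lub P le {x, y} j \<longrightarrow> is_lub P le {c j, c (c y)} m \<longrightarrow>
                 is_lub P le {c m, y} k \<longrightarrow> k = j))"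

definition is_lattice :: "'a set \<Rightarrow> ('a \<Rightarrow> 'a \<Rightarrow> bool) \<Rightarrow> bool" where
  "is_lattice P le \<longleftrightarrow>
     (\<forall>x\<in>P. \<forall>y\<in>P. (\<exists>j. is_lub P le {x, y} j) \<and> (\<exists>m. is_glb P le {x, y} m))"

definition DM_carrier :: "'a set \<Rightarrow> ('a \<Rightarrow> 'a \<Rightarrow> bool) \<Rightarrow> 'a set set" where
  "DM_carrier P le = {B. B \<subseteq> P \<and> lowerB P le (upperB P le B) = B}"

definition DM_comp :: "'a set \<Rightarrow> ('a \<Rightarrow> 'a \<Rightarrow> bool) \<Rightarrow> ('a \<Rightarrow> 'a) \<Rightarrow> 'a set \<Rightarrow> 'a set" where
  "DM_comp P le c X = lowerB P le (c ` X)"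

definition orthomodular_lattice :: "'b set \<Rightarrow> ('b \<Rightarrow> 'b \<Rightarrow> bool) \<Rightarrow> ('b \<Rightarrow> 'b) \<Rightarrow> bool" where
  "orthomodular_lattice C le c \<longleftrightarrow>
     (\<forall>x\<in>C. \<forall>y\<in>C. lub C le {x, y} = lub C le {glb C le {lub C le {x, y}, c y}, y})"

end

theory Submission
  imports Defs
begin

text \<open>Take a, b without a join and a minimal upper bound u of {a, b} (it exists by finiteness).
  In DM(P) the cut A = L(U{a, b}) lies strictly below the principal ideal L{u}. Every x \<le> u
  orthogonal to a and b is 0: the orthogonal join j = x \<or> u' has j' as an upper bound of a and b
  below u, so j' = u and x lies below both u and u'. Hence L{u} \<inter> A' = {0} \<subseteq> A, which the orthomodular
  law forbids for A \<subset> L{u}.\<close>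

lemma lowerB_upperB_lowerB:
  assumes "T \<subseteq> P"
  shows "lowerB P le (upperB P le (lowerB P le T)) = lowerB P le T"
proof
  from assms have "T \<subseteq> upperB P le (lowerB P le T)"
    unfolding lowerB_def upperB_def by blast
  then show "lowerB P le (upperB P le (lowerB P le T)) \<subseteq> lowerB P le T"
    unfolding lowerB_def by blast
  show "lowerB P le T \<subseteq> lowerB P le (upperB P le (lowerB P le T))"
    unfolding lowerB_def upperB_def by blast
qed

lemma lowerB_in_DM_carrier: "T \<subseteq> P \<Longrightarrow> lowerB P le T \<in> DM_carrier P le"
  unfolding DM_carrier_def using lowerB_upperB_lowerB[of T P le] by (auto simp: lowerB_def)

lemma lub_subset_absorb: "X \<in> C \<Longrightarrow> Y \<subseteq> X \<Longrightarrow> lub C (\<subseteq>) {X, Y} = X"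
  unfolding lub_def
  by (rule the_equality) (auto simp: is_lub_def upperB_def)

lemma glb_subset_Int: "X \<inter> Y \<in> C \<Longrightarrow> glb C (\<subseteq>) {X, Y} = X \<inter> Y"
  unfolding glb_def
  by (rule the_equality) (auto simp: is_glb_def lowerB_def)

lemma orthomodular_lattice_subset_eq:
  assumes "orthomodular_lattice C (\<subseteq>) c"
    and "X \<in> C" "Y \<in> C" "Y \<subseteq> X"
    and "X \<inter> c Y \<in> C" "X \<inter> c Y \<subseteq> Y"
  shows "X = Y"
proof -
  have "lub C (\<subseteq>) {X, Y} = lub C (\<subseteq>) {glb C (\<subseteq>) {lub C (\<subseteq>) {X, Y}, c Y}, Y}"
    using assms(1-3) unfolding orthomodular_lattice_def by blast
  also have "\<dots> = lub C (\<subseteq>) {Y, X \<inter> c Y}"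
    using assms(2,4,5) by (simp add: lub_subset_absorb glb_subset_Int insert_commute)
  finally show ?thesis
    using assms by (simp add: lub_subset_absorb)
qed

lemma finite_poset_obtains_minimal:
  assumes "partial_order_on' P le" "finite P" "S \<subseteq> P" "s \<in> S"
  obtains u where "u \<in> S" "\<And>w. w \<in> S \<Longrightarrow> le w u \<Longrightarrow> w = u"
proof -
  have refl: "\<And>x. x \<in> P \<Longrightarrow> le x x"
    using assms(1) by (simp add: partial_order_on'_def)
  have antisym: "\<And>x y. x \<in> P \<Longrightarrow> y \<in> P \<Longrightarrow> le x y \<Longrightarrow> le y x \<Longrightarrow> x = y"
    using assms(1) unfolding partial_order_on'_def by blast
  have trans: "\<And>x y z. x \<in> P \<Longrightarrow> y \<in> P \<Longrightarrow> z \<in> P \<Longrightarrow> le x y \<Longrightarrow> le y z \<Longrightarrow> le x z"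
    using assms(1) unfolding partial_order_on'_def by blast
  \<comment> \<open>Minimise the number of elements below u; a strictly smaller element has strictly fewer.\<close>
  obtain u where "u \<in> S"
    and u_least: "\<And>w. w \<in> S \<Longrightarrow> card (lowerB P le {u}) \<le> card (lowerB P le {w})"
    using ex_has_least_nat[of "\<lambda>w. w \<in> S" s "\<lambda>w. card (lowerB P le {w})"] assms(4) by blast
  have minimal: "w = u" if "w \<in> S" "le w u" for w
  proof (rule ccontr)
    assume "w \<noteq> u"
    have "w \<in> P" "u \<in> P" using that(1) \<open>u \<in> S\<close> assms(3) by auto
    have "lowerB P le {w} \<subseteq> lowerB P le {u}"
      using trans[OF _ \<open>w \<in> P\<close> \<open>u \<in> P\<close> _ \<open>le w u\<close>] by (auto simp: lowerB_def)
    moreover have "u \<in> lowerB P le {u}"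
      using refl \<open>u \<in> P\<close> by (simp add: lowerB_def)
    moreover have "u \<notin> lowerB P le {w}"
      using antisym \<open>w \<in> P\<close> \<open>u \<in> P\<close> \<open>le w u\<close> \<open>w \<noteq> u\<close> by (auto simp: lowerB_def)
    ultimately have "lowerB P le {w} \<subset> lowerB P le {u}" by blast
    then have "card (lowerB P le {w}) < card (lowerB P le {u})"
      by (rule psubset_card_mono[rotated]) (simp add: lowerB_def assms(2))
    with u_least[OF \<open>w \<in> S\<close>] show False by simp
  qed
  show ?thesis by (rule that[OF \<open>u \<in> S\<close> minimal])
qed

locale complemented_poset =
  fixes P :: "'a set" and le :: "'a \<Rightarrow> 'a \<Rightarrow> bool" and c :: "'a \<Rightarrow> 'a" and zero one :: 'a
  assumes poset_with_complementation: "poset_with_complementation P le c zero one"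
begin

lemma partial_order: "partial_order_on' P le"
  and reflexive: "x \<in> P \<Longrightarrow> le x x"
  and antisymmetric: "x \<in> P \<Longrightarrow> y \<in> P \<Longrightarrow> le x y \<Longrightarrow> le y x \<Longrightarrow> x = y"
  and zero_in: "zero \<in> P" and one_in: "one \<in> P"
  and zero_least: "x \<in> P \<Longrightarrow> le zero x" and one_greatest: "x \<in> P \<Longrightarrow> le x one"
  and c_closed: "x \<in> P \<Longrightarrow> c x \<in> P"
  and c_antitone: "x \<in> P \<Longrightarrow> y \<in> P \<Longrightarrow> le x y \<Longrightarrow> le (c y) (c x)"
  and c_involutive: "x \<in> P \<Longrightarrow> c (c x) = x"
  and lowerB_complement: "x \<in> P \<Longrightarrow> lowerB P le {x, c x} = {zero}"
  using poset_with_complementation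
  unfolding poset_with_complementation_def partial_order_on'_def by blast+

lemma le_c_commute: "x \<in> P \<Longrightarrow> y \<in> P \<Longrightarrow> le x (c y) \<Longrightarrow> le y (c x)"
  by (metis c_antitone c_closed c_involutive)

lemma is_glb_c_if_is_lub_c:
  assumes "x \<in> P" "y \<in> P" "is_lub P le {c x, c y} j"
  shows "is_glb P le {x, y} (c j)"
proof -
  have "j \<in> P" "le (c x) j" "le (c y) j"
    and j_least: "\<And>w. w \<in> P \<Longrightarrow> le (c x) w \<Longrightarrow> le (c y) w \<Longrightarrow> le j w"
    using assms(3) unfolding is_lub_def upperB_def by auto
  have "le l (c j)" if "l \<in> P" "le l x" "le l y" for l
    using that assms(1,2) \<open>j \<in> P\<close> j_least[of "c l"] c_antitone c_closed le_c_commute by blast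
  moreover have "le (c j) x" "le (c j) y"
    using c_antitone[of "c x" j] c_antitone[of "c y" j] c_closed c_involutive assms(1,2)
      \<open>j \<in> P\<close> \<open>le (c x) j\<close> \<open>le (c y) j\<close> by auto
  ultimately show ?thesis
    using \<open>j \<in> P\<close> c_closed unfolding is_glb_def lowerB_def by auto
qed

lemma not_lattice_obtains_pair_without_lub:
  assumes "\<not> is_lattice P le"
  obtains a b where "a \<in> P" "b \<in> P" "\<nexists>j. is_lub P le {a, b} j"
proof -
  obtain x y where "x \<in> P" "y \<in> P"
    and "(\<nexists>j. is_lub P le {x, y} j) \<or> (\<nexists>m. is_glb P le {x, y} m)"
    using assms unfolding is_lattice_def by blast
  then show ?thesis
    using that c_closed is_glb_c_if_is_lub_c by blast
qed

lemma zero_in_lowerB: "T \<subseteq> P \<Longrightarrow> zero \<in> lowerB P le T"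
  unfolding lowerB_def using zero_in zero_least by blast

lemma one_in_upperB: "T \<subseteq> P \<Longrightarrow> one \<in> upperB P le T"
  unfolding upperB_def using one_in one_greatest by blast

lemma lowerB_zero: "lowerB P le {zero} = {zero}"
  unfolding lowerB_def using zero_in zero_least antisymmetric by blast

end

locale orthojoin_poset = complemented_poset +
  assumes orthogonal_join_exists: "x \<in> P \<Longrightarrow> y \<in> P \<Longrightarrow> le x (c y) \<Longrightarrow> \<exists>j. is_lub P le {x, y} j"
begin

lemma principal_ideal_inf_DM_comp:
  assumes "M \<subseteq> P" "u \<in> upperB P le M"
    and u_minimal: "\<And>w. w \<in> upperB P le M \<Longrightarrow> le w u \<Longrightarrow> w = u"
  shows "lowerB P le {u} \<inter> DM_comp P le c (lowerB P le (upperB P le M)) = {zero}"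
proof
  have "u \<in> P" and u_upper: "\<And>m. m \<in> M \<Longrightarrow> le m u"
    using assms(2) unfolding upperB_def by auto
  show "lowerB P le {u} \<inter> DM_comp P le c (lowerB P le (upperB P le M)) \<subseteq> {zero}"
  proof
    fix x assume x: "x \<in> lowerB P le {u} \<inter> DM_comp P le c (lowerB P le (upperB P le M))"
    have "M \<subseteq> lowerB P le (upperB P le M)"
      using assms(1) unfolding lowerB_def upperB_def by blast
    with x have "x \<in> P" "le x u" and x_orth: "\<And>m. m \<in> M \<Longrightarrow> le x (c m)"
      unfolding DM_comp_def lowerB_def by auto
    then obtain j where "is_lub P le {x, c u} j"
      using orthogonal_join_exists[of x "c u"] \<open>u \<in> P\<close> c_closed c_involutive by auto
    then have "j \<in> P" "le x j" "le (c u) j"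
      and j_least: "\<And>w. w \<in> P \<Longrightarrow> le x w \<Longrightarrow> le (c u) w \<Longrightarrow> le j w"
      unfolding is_lub_def upperB_def by auto
    have "le m (c j)" if "m \<in> M" for m
    proof -
      have "m \<in> P" using that assms(1) by blast
      then have "le j (c m)"
        using j_least x_orth that c_closed c_antitone \<open>u \<in> P\<close> u_upper by blast
      then show ?thesis using le_c_commute \<open>j \<in> P\<close> \<open>m \<in> P\<close> by blast
    qed
    then have "c j \<in> upperB P le M"
      unfolding upperB_def using c_closed \<open>j \<in> P\<close> by blast
    moreover have "le (c j) u"
      using c_antitone[of "c u" j] c_closed c_involutive \<open>u \<in> P\<close> \<open>j \<in> P\<close> \<open>le (c u) j\<close> by auto
    ultimately have "c j = u" by (rule u_minimal)
    then have "le x (c u)"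
      using \<open>le x j\<close> c_involutive \<open>j \<in> P\<close> by metis
    with \<open>x \<in> P\<close> \<open>le x u\<close> have "x \<in> lowerB P le {u, c u}"
      unfolding lowerB_def by auto
    then show "x \<in> {zero}" using lowerB_complement \<open>u \<in> P\<close> by simp
  qed
  show "{zero} \<subseteq> lowerB P le {u} \<inter> DM_comp P le c (lowerB P le (upperB P le M))"
    unfolding DM_comp_def
    using zero_in_lowerB \<open>u \<in> P\<close> c_closed by (auto simp: lowerB_def)
qed

end

lemma orthojoin_poset_if_orthomodular_poset:
  "orthomodular_poset P le c zero one \<Longrightarrow> orthojoin_poset P le c zero one"
  unfolding orthomodular_poset_def orthojoin_poset_def orthojoin_poset_axioms_def
    complemented_poset_def
  by blast

theorem corollary2:
  fixes P :: "'a set" and le :: "'a \<Rightarrow> 'a \<Rightarrow> bool" and c :: "'a \<Rightarrow> 'a" and zero one :: 'a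
  assumes "finite P"
    and "orthomodular_poset P le c zero one"
    and "\<not> is_lattice P le"
  shows "\<not> orthomodular_lattice (DM_carrier P le) (\<subseteq>) (DM_comp P le c)"
proof
  assume oml: "orthomodular_lattice (DM_carrier P le) (\<subseteq>) (DM_comp P le c)"
  interpret orthojoin_poset P le c zero one
    using assms(2) by (rule orthojoin_poset_if_orthomodular_poset)
  obtain a b where "a \<in> P" "b \<in> P" and no_lub: "\<nexists>j. is_lub P le {a, b} j"
    using not_lattice_obtains_pair_without_lub assms(3) by blast
  define M where "M = {a, b}"
  define A where "A = lowerB P le (upperB P le M)"
  have "M \<subseteq> P" using \<open>a \<in> P\<close> \<open>b \<in> P\<close> M_def by blast
  obtain u where u: "u \<in> upperB P le M" and u_minimal: "\<And>w. w \<in> upperB P le M \<Longrightarrow> le w u \<Longrightarrow> w = u"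
    using finite_poset_obtains_minimal[OF partial_order assms(1) _ one_in_upperB[OF \<open>M \<subseteq> P\<close>]]
    unfolding upperB_def by blast
  have "u \<in> P" using u unfolding upperB_def by blast
  have "u \<notin> A"
    using u no_lub unfolding A_def M_def is_lub_def lowerB_def by blast
  moreover have "lowerB P le {u} = A"
  proof (rule orthomodular_lattice_subset_eq[OF oml])
    show "lowerB P le {u} \<in> DM_carrier P le" "A \<in> DM_carrier P le"
      using \<open>u \<in> P\<close> unfolding A_def by (auto intro: lowerB_in_DM_carrier simp: upperB_def)
    show "A \<subseteq> lowerB P le {u}"
      using u unfolding A_def lowerB_def by blast
    have meet: "lowerB P le {u} \<inter> DM_comp P le c A = {zero}"
      unfolding A_def using principal_ideal_inf_DM_comp \<open>M \<subseteq> P\<close> u u_minimal by blast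
    show "lowerB P le {u} \<inter> DM_comp P le c A \<in> DM_carrier P le"
      unfolding meet using lowerB_in_DM_carrier[of "{zero}" P le] lowerB_zero zero_in by simp
    show "lowerB P le {u} \<inter> DM_comp P le c A \<subseteq> A"
      unfolding meet using zero_in_lowerB[of "upperB P le M"] by (simp add: A_def upperB_def)
  qed
  ultimately show False
    using reflexive \<open>u \<in> P\<close> unfolding lowerB_def by blast
qed

end
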